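(* For all integers $n\ge2$ and $d$, the $(n-1)\times(n-1)$ matrix $P(n,d)=\bigl(p_{n,d}(i,j)\bigr)_{i,j=1}^{n-1}$ is symmetric and Toeplitz, i.e. $p_{n,d}(i,j)=p_{n,d}(j,i)$ for all $i,j\in[n-1]$ and $p_{n,d}(i+1,j+1)=p_{n,d}(i,j)$ for all $i,j\in[n-2]$.
   Context: A cycle $(c_1c_2\cdots c_k)$ of a permutation means $c_1\mapsto c_2\mapsto\cdots\mapsto c_k\mapsto c_1$. Its cyclic descent number is $\operatorname{cdes}(c)=\lvert\{t\in[k]: c_t>c_{t+1}\}\rvert$ and its cyclic ascent number $\operatorname{casc}(c)=\lvert\{t\in[k]: c_t<c_{t+1}\}\rvert$, where $c_{k+1}=c_1$; its cyclic weight is $w(c)=\min(\operatorname{cdes}(c),\operatorname{casc}(c))$, and the cyclic weight $w(\pi)$ of a permutation $\pi$ is the sum of the cyclic weights of all its cycles. An odd order permutation is one all of whose cycles have odd length. $\mathscr{P}_{n,d}$ is the set of odd order permutations of $[n]$ with cyclic weight $d$, and $p_{n,d}(i,j)$ is the number of $\pi\in\mathscr{P}_{n,d}$ containing $i\,n\,j$ as a cyclic factor, i.e. some cycle of $\pi$, written starting at a suitable element, contains $i,n,j$ consecutively (equivalently $\pi(i)=n$ and $\pi(n)=j$). *)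

theory Defs
  imports "HOL-Combinatorics.Permutations"
begin

text \<open>The cycle of \<pi> through x is its orbit; written as (c_1 ... c_k) with c_{t+1} = \<pi> c_t,
  the positions t with c_t > c_{t+1} correspond bijectively to the elements y of the
  cycle with \<pi> y < y.\<close>

definition cycle_of :: "(nat \<Rightarrow> nat) \<Rightarrow> nat \<Rightarrow> nat set" where
  "cycle_of \<pi> x = {(\<pi> ^^ k) x | k. True}"

definition cycles_of :: "nat \<Rightarrow> (nat \<Rightarrow> nat) \<Rightarrow> nat set set" where
  "cycles_of n \<pi> = cycle_of \<pi> ` {1..n}"

definition cdes :: "(nat \<Rightarrow> nat) \<Rightarrow> nat set \<Rightarrow> nat" where
  "cdes \<pi> C = card {y \<in> C. \<pi> y < y}"

definition casc :: "(nat \<Rightarrow> nat) \<Rightarrow> nat set \<Rightarrow> nat" where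
  "casc \<pi> C = card {y \<in> C. y < \<pi> y}"

definition cyc_weight :: "(nat \<Rightarrow> nat) \<Rightarrow> nat set \<Rightarrow> nat" where
  "cyc_weight \<pi> C = min (cdes \<pi> C) (casc \<pi> C)"

definition perm_weight :: "nat \<Rightarrow> (nat \<Rightarrow> nat) \<Rightarrow> nat" where
  "perm_weight n \<pi> = (\<Sum>C\<in>cycles_of n \<pi>. cyc_weight \<pi> C)"

definition odd_order :: "nat \<Rightarrow> (nat \<Rightarrow> nat) \<Rightarrow> bool" where
  "odd_order n \<pi> \<longleftrightarrow> (\<forall>C\<in>cycles_of n \<pi>. odd (card C))"

definition P_set :: "nat \<Rightarrow> int \<Rightarrow> (nat \<Rightarrow> nat) set" where
  "P_set n d = {\<pi>. \<pi> permutes {1..n} \<and> odd_order n \<pi> \<and> int (perm_weight n \<pi>) = d}"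

definition p_count :: "nat \<Rightarrow> int \<Rightarrow> nat \<Rightarrow> nat \<Rightarrow> nat" where
  "p_count n d i j = card {\<pi> \<in> P_set n d. \<pi> i = n \<and> \<pi> n = j}"

end

theory Submission
  imports Defs "HOL-Combinatorics.Orbits"
begin

(* Inversion maps the permutations containing the cyclic factor i n j bijectively onto those
   containing j n i; it keeps the cycles as sets and exchanges cyclic descents with cyclic
   ascents, so the cyclic weight is unchanged.

   For the Toeplitz property conjugate by the cycle (1 2 ... n-1), which fixes n and turns the
   factor i n j into (i+1) n (j+1). This relabelling keeps the relative order of all letters
   except n-1, which becomes the smallest one. If n-1 is not a fixed point, neither of its
   neighbours in its cycle is n (as i, j are not n-1), so n-1 is a cyclic peak that becomes a
   cyclic valley: one descent turns into an ascent and one ascent into a descent, and every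
   cycle keeps its numbers of descents and ascents. *)

lemma cycles_of_permutes:
  assumes "\<pi> permutes {1..n}"
  shows "cycles_of n \<pi> = orbit \<pi> ` {1..n}"
proof -
  have "permutation \<pi>"
    using permutes_imp_permutation[OF _ assms] by simp
  then show ?thesis
    unfolding cycles_of_def cycle_of_def by (simp add: orbit_altdef_permutation)
qed

lemma permutation_image_orbit:
  assumes "permutation \<pi>"
  shows "\<pi> ` orbit \<pi> x = orbit \<pi> x"
  using orbit_inverse[OF permutation_self_in_orbit[OF assms], where g' = \<pi> and f = \<pi>]
  by (simp add: permutation_orbit_step[OF assms])

lemma cdes_inv:
  assumes "inj \<pi>" "\<pi> ` C = C"
  shows "cdes (inv \<pi>) C = casc \<pi> C"
proof -
  have "{y \<in> \<pi> ` C. inv \<pi> y < y} = \<pi> ` {x \<in> C. x < \<pi> x}"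
    using assms(1) by (auto simp: inv_f_f)
  then show ?thesis
    unfolding cdes_def casc_def assms(2) using assms(1) by (simp add: card_image inj_on_subset)
qed

lemma casc_inv:
  assumes "inj \<pi>" "\<pi> ` C = C"
  shows "casc (inv \<pi>) C = cdes \<pi> C"
proof -
  have "{y \<in> \<pi> ` C. y < inv \<pi> y} = \<pi> ` {x \<in> C. \<pi> x < x}"
    using assms(1) by (auto simp: inv_f_f)
  then show ?thesis
    unfolding cdes_def casc_def assms(2) using assms(1) by (simp add: card_image inj_on_subset)
qed

lemma cyc_weight_inv:
  assumes "inj \<pi>" "\<pi> ` C = C"
  shows "cyc_weight (inv \<pi>) C = cyc_weight \<pi> C"
  unfolding cyc_weight_def cdes_inv[OF assms] casc_inv[OF assms] by simp

lemma cycles_of_inv: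
  assumes "\<pi> permutes {1..n}"
  shows "cycles_of n (inv \<pi>) = cycles_of n \<pi>"
  using permutes_imp_permutation[OF _ assms]
  by (simp add: cycles_of_permutes[OF assms] cycles_of_permutes[OF permutes_inv[OF assms]]
      orbit_inv_eq)

lemma perm_weight_inv:
  assumes "\<pi> permutes {1..n}"
  shows "perm_weight n (inv \<pi>) = perm_weight n \<pi>"
proof -
  have "permutation \<pi>"
    using permutes_imp_permutation[OF _ assms] by simp
  have "cyc_weight (inv \<pi>) C = cyc_weight \<pi> C" if "C \<in> cycles_of n \<pi>" for C
  proof -
    from that obtain x where "C = orbit \<pi> x"
      by (auto simp: cycles_of_permutes[OF assms])
    then show ?thesis
      using \<open>permutation \<pi>\<close>
      by (simp add: cyc_weight_inv permutes_inj[OF assms] permutation_image_orbit)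
  qed
  then show ?thesis
    unfolding perm_weight_def cycles_of_inv[OF assms] by (rule sum.cong[OF refl])
qed

lemma odd_order_inv:
  assumes "\<pi> permutes {1..n}"
  shows "odd_order n (inv \<pi>) \<longleftrightarrow> odd_order n \<pi>"
  unfolding odd_order_def cycles_of_inv[OF assms] ..

lemma orbit_conj:
  assumes "permutation \<pi>" "bij \<sigma>"
  shows "orbit (\<sigma> \<circ> \<pi> \<circ> inv \<sigma>) (\<sigma> x) = \<sigma> ` orbit \<pi> x"
  using orbit_inverse[OF permutation_self_in_orbit[OF assms(1)], where g' = "\<sigma> \<circ> \<pi> \<circ> inv \<sigma>"
      and f = \<sigma>] assms(2)
  by (simp add: bij_is_inj inv_f_f)

lemma cycles_of_conj:
  assumes "\<sigma> permutes {1..n}" "\<pi> permutes {1..n}"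
  shows "cycles_of n (\<sigma> \<circ> \<pi> \<circ> inv \<sigma>) = image \<sigma> ` cycles_of n \<pi>"
proof -
  have "(\<sigma> \<circ> \<pi> \<circ> inv \<sigma>) permutes {1..n}"
    using assms by (simp add: permutes_compose permutes_inv)
  then have "cycles_of n (\<sigma> \<circ> \<pi> \<circ> inv \<sigma>) = orbit (\<sigma> \<circ> \<pi> \<circ> inv \<sigma>) ` \<sigma> ` {1..n}"
    by (simp only: cycles_of_permutes permutes_image[OF assms(1)])
  also have "\<dots> = image \<sigma> ` cycles_of n \<pi>"
    using permutes_imp_permutation[OF _ assms(2)] permutes_bij[OF assms(1)]
    by (simp add: cycles_of_permutes[OF assms(2)] image_image orbit_conj)
  finally show ?thesis .
qed

lemma cdes_conj:
  assumes "inj \<sigma>"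
  shows "cdes (\<sigma> \<circ> \<pi> \<circ> inv \<sigma>) (\<sigma> ` C) = card {x \<in> C. \<sigma> (\<pi> x) < \<sigma> x}"
proof -
  have "{y \<in> \<sigma> ` C. (\<sigma> \<circ> \<pi> \<circ> inv \<sigma>) y < y} = \<sigma> ` {x \<in> C. \<sigma> (\<pi> x) < \<sigma> x}"
    using assms by (auto simp: inv_f_f)
  then show ?thesis
    unfolding cdes_def using assms by (simp add: card_image inj_on_subset)
qed

lemma casc_conj:
  assumes "inj \<sigma>"
  shows "casc (\<sigma> \<circ> \<pi> \<circ> inv \<sigma>) (\<sigma> ` C) = card {x \<in> C. \<sigma> x < \<sigma> (\<pi> x)}"
proof -
  have "{y \<in> \<sigma> ` C. y < (\<sigma> \<circ> \<pi> \<circ> inv \<sigma>) y} = \<sigma> ` {x \<in> C. \<sigma> x < \<sigma> (\<pi> x)}"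
    using assms by (auto simp: inv_f_f)
  then show ?thesis
    unfolding casc_def using assms by (simp add: card_image inj_on_subset)
qed

lemma odd_order_conj:
  assumes "\<sigma> permutes {1..n}" "\<pi> permutes {1..n}"
  shows "odd_order n (\<sigma> \<circ> \<pi> \<circ> inv \<sigma>) \<longleftrightarrow> odd_order n \<pi>"
  unfolding odd_order_def cycles_of_conj[OF assms]
  using permutes_inj[OF assms(1)] by (simp add: card_image inj_on_subset)

lemma perm_weight_conj:
  assumes "\<sigma> permutes {1..n}" "\<pi> permutes {1..n}"
    and "\<And>C. C \<in> cycles_of n \<pi> \<Longrightarrow>
      card {x \<in> C. \<sigma> (\<pi> x) < \<sigma> x} = cdes \<pi> C \<and> card {x \<in> C. \<sigma> x < \<sigma> (\<pi> x)} = casc \<pi> C"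
  shows "perm_weight n (\<sigma> \<circ> \<pi> \<circ> inv \<sigma>) = perm_weight n \<pi>"
proof -
  have inj: "inj \<sigma>"
    using assms(1) by (rule permutes_inj)
  then have "inj_on (image \<sigma>) (cycles_of n \<pi>)"
    by (simp add: inj_on_def inj_image_eq_iff)
  then have "perm_weight n (\<sigma> \<circ> \<pi> \<circ> inv \<sigma>) =
      (\<Sum>C\<in>cycles_of n \<pi>. cyc_weight (\<sigma> \<circ> \<pi> \<circ> inv \<sigma>) (\<sigma> ` C))"
    unfolding perm_weight_def cycles_of_conj[OF assms(1,2)] by (simp add: sum.reindex)
  also have "\<dots> = perm_weight n \<pi>"
    unfolding perm_weight_def cyc_weight_def
    using assms(3) by (simp add: cdes_conj[OF inj] casc_conj[OF inj])
  finally show ?thesis .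
qed

lemma p_count_swap: "p_count n d i j = p_count n d j i"
proof -
  have into: "inv ` {\<pi> \<in> P_set n d. \<pi> i = n \<and> \<pi> n = j} \<subseteq> {\<pi> \<in> P_set n d. \<pi> j = n \<and> \<pi> n = i}"
    for i j
    by (auto simp: P_set_def permutes_inv perm_weight_inv odd_order_inv permutes_inv_eq)
  have "bij_betw inv {\<pi> \<in> P_set n d. \<pi> i = n \<and> \<pi> n = j} {\<pi> \<in> P_set n d. \<pi> j = n \<and> \<pi> n = i}"
    by (rule bij_betw_byWitness[where f' = inv])
      (use into in \<open>auto simp: P_set_def permutes_inv_inv\<close>)
  then show ?thesis
    unfolding p_count_def by (rule bij_betw_same_card)
qed

lemma p_count_conj:
  assumes \<sigma>: "\<sigma> permutes {1..n}" "\<sigma> n = n"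
    and weight: "\<And>\<pi>. \<pi> permutes {1..n} \<Longrightarrow> \<pi> i = n \<Longrightarrow> \<pi> n = j \<Longrightarrow>
      perm_weight n (\<sigma> \<circ> \<pi> \<circ> inv \<sigma>) = perm_weight n \<pi>"
  shows "p_count n d (\<sigma> i) (\<sigma> j) = p_count n d i j"
proof -
  let ?A = "{\<pi> \<in> P_set n d. \<pi> i = n \<and> \<pi> n = j}"
  let ?B = "{\<pi> \<in> P_set n d. \<pi> (\<sigma> i) = n \<and> \<pi> n = \<sigma> j}"
  have inv_n: "inv \<sigma> n = n"
    using \<sigma> by (simp add: permutes_inv_eq)
  have into_B: "\<sigma> \<circ> \<pi> \<circ> inv \<sigma> \<in> ?B" if "\<pi> \<in> ?A" for \<pi>
    using that \<sigma> weight[of \<pi>] inv_n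
    by (simp add: P_set_def permutes_compose permutes_inv odd_order_conj permutes_inverses)
  have into_A: "inv \<sigma> \<circ> q \<circ> \<sigma> \<in> ?A" if "q \<in> ?B" for q
  proof -
    define \<pi> where "\<pi> = inv \<sigma> \<circ> q \<circ> \<sigma>"
    have q: "q = \<sigma> \<circ> \<pi> \<circ> inv \<sigma>"
      by (simp add: \<pi>_def fun_eq_iff permutes_inverses[OF \<sigma>(1)])
    have \<pi>: "\<pi> permutes {1..n}" "\<pi> i = n" "\<pi> n = j"
      using that \<sigma> inv_n
      by (simp_all add: \<pi>_def P_set_def permutes_compose permutes_inv permutes_inverses)
    have "\<sigma> \<circ> \<pi> \<circ> inv \<sigma> \<in> P_set n d"
      using that q by simp
    then have "\<pi> \<in> ?A"
      using \<pi> weight[OF \<pi>] odd_order_conj[OF \<sigma>(1) \<pi>(1)] by (simp add: P_set_def)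
    then show ?thesis
      by (simp add: \<pi>_def)
  qed
  have "bij_betw (\<lambda>\<pi>. \<sigma> \<circ> \<pi> \<circ> inv \<sigma>) ?A ?B"
    by (rule bij_betw_byWitness[where f' = "\<lambda>q. inv \<sigma> \<circ> q \<circ> \<sigma>"])
      (use into_A into_B in \<open>auto simp: fun_eq_iff permutes_inverses[OF \<sigma>(1)]\<close>)
  then show ?thesis
    unfolding p_count_def by (rule bij_betw_same_card[symmetric])
qed

lemma card_insert_Diff_swap:
  assumes "finite D" "m \<in> D" "a \<notin> D"
  shows "card (insert a (D - {m})) = card D"
  using assms by (metis DiffD1 card_Suc_Diff1 card_insert_disjoint finite_Diff)

lemma card_descents_relabel_peak:
  fixes \<pi> :: "'a::linorder \<Rightarrow> 'a" and \<sigma> :: "'a \<Rightarrow> 'b::linorder"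
  assumes "finite C" and closed: "\<And>x. x \<in> C \<Longrightarrow> \<pi> x \<in> C"
    and a: "a \<in> C" "\<pi> a = m" "a < m" and m: "\<pi> m < m"
    and pred: "\<And>x. x \<in> C \<Longrightarrow> \<pi> x = m \<Longrightarrow> x = a"
    and mono: "\<And>x y. x \<in> C - {m} \<Longrightarrow> y \<in> C - {m} \<Longrightarrow> \<sigma> x < \<sigma> y \<longleftrightarrow> x < y"
    and bottom: "\<And>x. x \<in> C - {m} \<Longrightarrow> \<sigma> m < \<sigma> x"
  shows "card {x \<in> C. \<sigma> (\<pi> x) < \<sigma> x} = card {x \<in> C. \<pi> x < x} \<and>
         card {x \<in> C. \<sigma> x < \<sigma> (\<pi> x)} = card {x \<in> C. x < \<pi> x}"
proof -
  have "m \<in> C" "\<pi> m \<in> C - {m}" "a \<in> C - {m}"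
    using closed a m by (metis, auto)
  then have peak: "\<sigma> m < \<sigma> (\<pi> m)" "\<sigma> (\<pi> a) < \<sigma> a"
    using a bottom by auto
  have other: "(\<sigma> (\<pi> x) < \<sigma> x \<longleftrightarrow> \<pi> x < x) \<and> (\<sigma> x < \<sigma> (\<pi> x) \<longleftrightarrow> x < \<pi> x)"
    if "x \<in> C" "x \<noteq> a" "x \<noteq> m" for x
    using that mono[of "\<pi> x" x] mono[of x "\<pi> x"] closed pred by auto
  have "{x \<in> C. \<sigma> (\<pi> x) < \<sigma> x} = insert a ({x \<in> C. \<pi> x < x} - {m})"
    using other peak \<open>m \<in> C\<close> a m by auto
  moreover have "{x \<in> C. \<sigma> x < \<sigma> (\<pi> x)} = insert m ({x \<in> C. x < \<pi> x} - {a})"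
    using other peak \<open>m \<in> C\<close> a m by auto
  ultimately show ?thesis
    using \<open>finite C\<close> \<open>m \<in> C\<close> a m by (simp add: card_insert_Diff_swap)
qed

lemma card_descents_relabel_orbit:
  fixes \<pi> :: "'a::linorder \<Rightarrow> 'a" and \<sigma> :: "'a \<Rightarrow> 'b::linorder"
  assumes \<pi>: "\<pi> permutes S" "finite S" "x0 \<in> S"
    and mono: "\<And>x y. x \<in> S - {m} \<Longrightarrow> y \<in> S - {m} \<Longrightarrow> \<sigma> x < \<sigma> y \<longleftrightarrow> x < y"
    and bottom: "\<And>x. x \<in> S - {m} \<Longrightarrow> \<sigma> m < \<sigma> x"
    and below: "\<pi> m \<le> m" "inv \<pi> m \<le> m"
  shows "card {x \<in> orbit \<pi> x0. \<sigma> (\<pi> x) < \<sigma> x} = card {x \<in> orbit \<pi> x0. \<pi> x < x} \<and>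
         card {x \<in> orbit \<pi> x0. \<sigma> x < \<sigma> (\<pi> x)} = card {x \<in> orbit \<pi> x0. x < \<pi> x}"
proof -
  let ?C = "orbit \<pi> x0"
  have CS: "?C \<subseteq> S"
    by (rule permutes_orbit_subset[OF \<pi>(1,3)])
  have closed: "\<pi> x \<in> ?C" if "x \<in> ?C" for x
    using that by (rule orbit.step)
  have inj: "inj \<pi>"
    using \<pi>(1) by (rule permutes_inj)
  show ?thesis
  proof (cases "m \<in> ?C \<and> \<pi> m \<noteq> m")
    case True
    define a where "a = inv \<pi> m"
    have a: "\<pi> a = m"
      using \<pi>(1) by (simp add: a_def permutes_inverses)
    have "a \<in> ?C"
      using True permutation_image_orbit[OF permutes_imp_permutation[OF \<pi>(2,1)]]
      by (metis a image_iff inj injD)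
    moreover have "a < m" "\<pi> m < m"
      using True below a by (auto simp: a_def order.order_iff_strict)
    moreover have "x = a" if "\<pi> x = m" for x
      using a that inj by (metis injD)
    ultimately show ?thesis
      using CS finite_subset[OF CS \<pi>(2)]
      by (intro card_descents_relabel_peak[where a = a and m = m] closed a mono bottom) auto
  next
    case False
    have stays: "\<pi> x \<noteq> m" if "x \<in> ?C" "x \<noteq> m" for x
      using False closed[OF that(1)] inj that(2) by (metis injD)
    have "(\<sigma> (\<pi> x) < \<sigma> x \<longleftrightarrow> \<pi> x < x) \<and> (\<sigma> x < \<sigma> (\<pi> x) \<longleftrightarrow> x < \<pi> x)" if "x \<in> ?C" for x
    proof (cases "x = m")
      case True
      with False that show ?thesis by simp
    next
      case False
      with that CS closed[OF that] stays[OF that False] show ?thesis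
        using mono[of "\<pi> x" x] mono[of x "\<pi> x"] by auto
    qed
    then have "{x \<in> ?C. \<sigma> (\<pi> x) < \<sigma> x} = {x \<in> ?C. \<pi> x < x}"
      "{x \<in> ?C. \<sigma> x < \<sigma> (\<pi> x)} = {x \<in> ?C. x < \<pi> x}"
      by blast+
    then show ?thesis by simp
  qed
qed

definition cyclic_shift :: "nat \<Rightarrow> nat \<Rightarrow> nat" where
  "cyclic_shift n x = (if x = n - 1 then 1 else if 1 \<le> x \<and> x < n - 1 then x + 1 else x)"

lemma cyclic_shift_permutes:
  assumes "n \<ge> 2"
  shows "cyclic_shift n permutes {1..n}"
proof (rule bij_imp_permutes)
  show "bij_betw (cyclic_shift n) {1..n} {1..n}"
    by (rule bij_betw_byWitness
        [where f' = "\<lambda>y. if y = 1 then n - 1 else if 1 < y \<and> y \<le> n - 1 then y - 1 else y"])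
      (use assms in \<open>auto simp: cyclic_shift_def\<close>)
qed (use assms in \<open>auto simp: cyclic_shift_def\<close>)

lemma cyclic_shift_eq_Suc: "x \<in> {1..n - 2} \<Longrightarrow> cyclic_shift n x = x + 1"
  by (auto simp: cyclic_shift_def)

lemma cyclic_shift_less_iff:
  "x \<in> {1..n} - {n - 1} \<Longrightarrow> y \<in> {1..n} - {n - 1} \<Longrightarrow> cyclic_shift n x < cyclic_shift n y \<longleftrightarrow> x < y"
  by (auto simp: cyclic_shift_def)

lemma cyclic_shift_last_less:
  "n \<ge> 2 \<Longrightarrow> x \<in> {1..n} - {n - 1} \<Longrightarrow> cyclic_shift n (n - 1) < cyclic_shift n x"
  by (auto simp: cyclic_shift_def)

lemma perm_weight_cyclic_shift_conj:
  assumes n: "n \<ge> 2" and \<pi>: "\<pi> permutes {1..n}" and "\<pi> (n - 1) \<noteq> n" "\<pi> n \<noteq> n - 1"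
  shows "perm_weight n (cyclic_shift n \<circ> \<pi> \<circ> inv (cyclic_shift n)) = perm_weight n \<pi>"
proof (rule perm_weight_conj[OF cyclic_shift_permutes[OF n] \<pi>])
  have "n - 1 \<in> {1..n}"
    using n by simp
  then have "\<pi> (n - 1) \<in> {1..n}" "inv \<pi> (n - 1) \<in> {1..n}"
    using permutes_in_image[OF \<pi>] permutes_in_image[OF permutes_inv[OF \<pi>]] by blast+
  moreover have "inv \<pi> (n - 1) \<noteq> n"
    using assms(4) permutes_inverses(1)[OF \<pi>] by metis
  ultimately have below: "\<pi> (n - 1) \<le> n - 1" "inv \<pi> (n - 1) \<le> n - 1"
    using assms(3) by auto
  fix C assume "C \<in> cycles_of n \<pi>"
  then obtain x0 where "x0 \<in> {1..n}" "C = orbit \<pi> x0"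
    by (auto simp: cycles_of_permutes[OF \<pi>])
  then show "card {x \<in> C. cyclic_shift n (\<pi> x) < cyclic_shift n x} = cdes \<pi> C \<and>
      card {x \<in> C. cyclic_shift n x < cyclic_shift n (\<pi> x)} = casc \<pi> C"
    unfolding cdes_def casc_def
    using card_descents_relabel_orbit[OF \<pi> finite_atLeastAtMost _ cyclic_shift_less_iff
        cyclic_shift_last_less[OF n]] below by blast
qed

lemma p_count_Suc:
  assumes "n \<ge> 2" "i \<in> {1..n - 2}" "j \<in> {1..n - 2}"
  shows "p_count n d (i + 1) (j + 1) = p_count n d i j"
proof -
  have "p_count n d (cyclic_shift n i) (cyclic_shift n j) = p_count n d i j"
  proof (rule p_count_conj[OF cyclic_shift_permutes[OF assms(1)]])
    fix \<pi> assume \<pi>: "\<pi> permutes {1..n}" "\<pi> i = n" "\<pi> n = j"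
    have "i \<noteq> n - 1"
      using assms(2) by auto
    then have "\<pi> (n - 1) \<noteq> n"
      using \<pi>(2) permutes_inj[OF \<pi>(1)] by (metis injD)
    then show "perm_weight n (cyclic_shift n \<circ> \<pi> \<circ> inv (cyclic_shift n)) = perm_weight n \<pi>"
      using perm_weight_cyclic_shift_conj[OF assms(1) \<pi>(1)] \<pi>(3) assms(3) by auto
  qed (use assms(1) in \<open>auto simp: cyclic_shift_def\<close>)
  then show ?thesis
    using assms(2,3) by (simp add: cyclic_shift_eq_Suc)
qed

theorem theorem3p2:
  fixes n :: nat and d :: int
  assumes "n \<ge> 2"
  shows "(\<forall>i\<in>{1..n-1}. \<forall>j\<in>{1..n-1}. p_count n d i j = p_count n d j i) \<and>
         (\<forall>i\<in>{1..n-2}. \<forall>j\<in>{1..n-2}. p_count n d (i+1) (j+1) = p_count n d i j)"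
  using p_count_swap p_count_Suc[OF assms] by blast

end
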